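(* Let $A$ be an independent set in $G(n,4,1)$, and let $A_0$, $k$, $A_2$ be as in the context. Then $|A_2|\le 2k^2+o(n^2)$, where the $o(n^2)$ term (as $n\to\infty$) does not depend on $A$ or on the choice of $A_0$.
   Context: $G(n,4,1)$ is the graph on the $4$-element subsets of $[n]$ in which two are adjacent iff they intersect in exactly one element. Let $A_0=\{v_1,\dots,v_k\}\subset A$ be a subfamily of pairwise disjoint sets of maximum possible cardinality, and let $A_2$ be the set of $v\in A\setminus A_0$ that intersect exactly two of the sets $v_1,\dots,v_k$. *)

theory Defs
  imports Complex_Main
begin

definition G_vertices :: "nat \<Rightarrow> nat set set" where
  "G_vertices n = {S. S \<subseteq> {1..n} \<and> card S = 4}"

definition G_adj :: "nat set \<Rightarrow> nat set \<Rightarrow> bool" where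
  "G_adj S T \<longleftrightarrow> card (S \<inter> T) = 1"

definition G_independent :: "nat \<Rightarrow> nat set set \<Rightarrow> bool" where
  "G_independent n A \<longleftrightarrow> A \<subseteq> G_vertices n \<and> (\<forall>S\<in>A. \<forall>T\<in>A. \<not> G_adj S T)"

definition pairwise_disjoint_fam :: "nat set set \<Rightarrow> bool" where
  "pairwise_disjoint_fam F \<longleftrightarrow> (\<forall>S\<in>F. \<forall>T\<in>F. S \<noteq> T \<longrightarrow> S \<inter> T = {})"

definition max_disjoint_subfamily :: "nat set set \<Rightarrow> nat set set \<Rightarrow> bool" where
  "max_disjoint_subfamily A A0 \<longleftrightarrow> A0 \<subseteq> A \<and> pairwise_disjoint_fam A0 \<and>
     (\<forall>B. B \<subseteq> A \<and> pairwise_disjoint_fam B \<longrightarrow> card B \<le> card A0)"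

definition A2_of :: "nat set set \<Rightarrow> nat set set \<Rightarrow> nat set set" where
  "A2_of A A0 = {v \<in> A - A0. card {u \<in> A0. u \<inter> v \<noteq> {}} = 2}"

end

theory Submission
  imports Defs
begin

text \<open>Group the sets \<open>v \<in> A2\<close>
  according to the pair \<open>p = {u1, u2} \<subseteq> A0\<close> of members they meet. Since \<open>A\<close> has no two sets
  meeting in exactly one point, \<open>v\<close> meets \<open>u1\<close> and \<open>u2\<close> in two points each and is the union of
  these two traces, so at most \<open>6 * 6\<close> sets share the pair \<open>p\<close>. If \<open>u1\<close> also belongs to
  another pair, realised by some \<open>v'\<close>, then \<open>v \<inter> v' \<subseteq> u1\<close>, so the trace of \<open>v\<close> on \<open>u1\<close> is
  the trace of \<open>v'\<close> or its complement in \<open>u1\<close>; hence a pair all of whose members lie in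
  further pairs carries at most \<open>2 * 2\<close> sets. The remaining pairs own a private member of \<open>A0\<close>,
  so there are at most \<open>k\<close> of them, giving \<open>|A2| \<le> 4 (k choose 2) + 36 k \<le> 2 k\<^sup>2 + 36 k\<close>;
  finally \<open>k \<le> n\<close>.\<close>

lemma card2_subsets_eq_or_complement:
  assumes "finite u" "card u = 4" "X \<subseteq> u" "Y \<subseteq> u" "card X = 2" "card Y = 2"
    and "card (X \<inter> Y) \<noteq> 1"
  shows "X = Y \<or> X = u - Y"
proof -
  have fin: "finite X" "finite Y" using assms finite_subset by auto
  have "card (X \<inter> Y) \<le> 2" using fin assms(5) by (metis card_mono inf_le1)
  then consider "card (X \<inter> Y) = 0" | "card (X \<inter> Y) = 2" using assms(7) by linarith
  then show ?thesis
  proof cases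
    case 1
    then have "X \<subseteq> u - Y" using fin assms(3) by auto
    moreover have "card (u - Y) = 2" using assms by (simp add: card_Diff_subset fin)
    ultimately show ?thesis using assms(1,5) by (metis card_subset_eq finite_Diff)
  next
    case 2
    then have "X \<inter> Y = X" "X \<inter> Y = Y" using fin assms(5,6)
      by (metis card_subset_eq inf_le1 inf_le2)+
    then show ?thesis by auto
  qed
qed

lemma card_pairwise_disjoint_fam_le:
  assumes "finite S" "pairwise_disjoint_fam F" "\<And>u. u \<in> F \<Longrightarrow> u \<noteq> {} \<and> u \<subseteq> S"
  shows "card F \<le> card S"
proof -
  have fin: "u \<in> F \<Longrightarrow> finite u" for u using assms(1,3) finite_subset by blast
  have "inj_on Min F"
  proof (rule inj_onI)
    fix u u' assume "u \<in> F" "u' \<in> F" "Min u = Min u'"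
    then have "Min u \<in> u \<inter> u'" using assms(3) fin by (metis IntI Min_in)
    then show "u = u'" using assms(2) \<open>u \<in> F\<close> \<open>u' \<in> F\<close> unfolding pairwise_disjoint_fam_def by blast
  qed
  moreover have "Min ` F \<subseteq> S" using assms(3) fin Min_in by blast
  ultimately show ?thesis using card_inj_on_le assms(1) by blast
qed

lemma four_choose_two_le: "4 * (k choose 2) \<le> 2 * k\<^sup>2"
proof -
  have "4 * (k * (k - 1) div 2) \<le> 2 * (k * (k - 1))" by simp
  also have "\<dots> \<le> 2 * k\<^sup>2" by (simp add: power2_eq_square)
  finally show ?thesis by (simp add: choose_two)
qed

locale independent_with_disjoint_subfamily =
  fixes n :: nat and A A0 :: "nat set set"
  assumes independent: "G_independent n A"
    and subfamily: "A0 \<subseteq> A"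
    and disjoint: "pairwise_disjoint_fam A0"
begin

definition touched :: "nat set \<Rightarrow> nat set set" where
  "touched v = {u \<in> A0. u \<inter> v \<noteq> {}}"

lemma member_A: "S \<in> A \<Longrightarrow> finite S \<and> card S = 4 \<and> S \<subseteq> {1..n}"
  using independent unfolding G_independent_def G_vertices_def by (auto intro: finite_subset)

lemma finite_A: "finite A"
  using member_A by (intro finite_subset[of A "Pow {1..n}"]) auto

lemma finite_A0: "finite A0"
  using finite_A subfamily finite_subset by auto

lemma card_Int_neq_1: "S \<in> A \<Longrightarrow> T \<in> A \<Longrightarrow> card (S \<inter> T) \<noteq> 1"
  using independent unfolding G_independent_def G_adj_def by auto

lemma disjoint_A0: "u \<in> A0 \<Longrightarrow> u' \<in> A0 \<Longrightarrow> u \<noteq> u' \<Longrightarrow> u \<inter> u' = {}"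
  using disjoint unfolding pairwise_disjoint_fam_def by auto

lemma A2_memD: "v \<in> A2_of A A0 \<Longrightarrow> v \<in> A \<and> card (touched v) = 2"
  unfolding A2_of_def touched_def by auto

lemma finite_A2: "finite (A2_of A A0)"
  using finite_A unfolding A2_of_def by auto

lemma A2_trace_card_and_cover:
  assumes v: "v \<in> A2_of A A0"
  shows "\<forall>u\<in>touched v. card (u \<inter> v) = 2" and "v = \<Union>((\<lambda>u. u \<inter> v) ` touched v)"
proof -
  obtain u1 u2 where T: "touched v = {u1, u2}" "u1 \<noteq> u2"
    using A2_memD[OF v] card_2_iff by metis
  have u: "u1 \<in> A0" "u2 \<in> A0" "u1 \<inter> v \<noteq> {}" "u2 \<inter> v \<noteq> {}"
    using T unfolding touched_def by auto
  have vA: "v \<in> A" and fv: "finite v" "card v = 4" using A2_memD[OF v] member_A by auto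
  have ge2: "card (u \<inter> v) \<ge> 2" if "u \<in> A0" "u \<inter> v \<noteq> {}" for u
  proof -
    have "card (u \<inter> v) \<noteq> 0" using that fv by simp
    moreover have "card (u \<inter> v) \<noteq> 1" using card_Int_neq_1[of u v] that subfamily vA by auto
    ultimately show ?thesis by linarith
  qed
  have "card (u1 \<inter> v) + card (u2 \<inter> v) = card ((u1 \<inter> v) \<union> (u2 \<inter> v))"
    using disjoint_A0[OF u(1,2) T(2)] fv by (intro card_Un_disjoint[symmetric]) auto
  moreover have "card ((u1 \<inter> v) \<union> (u2 \<inter> v)) \<le> card v" using fv by (intro card_mono) auto
  ultimately have two: "card (u1 \<inter> v) = 2" "card (u2 \<inter> v) = 2"
    and "card ((u1 \<inter> v) \<union> (u2 \<inter> v)) = card v"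
    using ge2[OF u(1,3)] ge2[OF u(2,4)] fv by linarith+
  then have "(u1 \<inter> v) \<union> (u2 \<inter> v) = v" using fv by (metis card_subset_eq Un_least inf_le2)
  then show "v = \<Union>((\<lambda>u. u \<inter> v) ` touched v)" using T by auto
  show "\<forall>u\<in>touched v. card (u \<inter> v) = 2" using T two by auto
qed

lemma A2_Int_subset_common_member:
  assumes v: "v \<in> A2_of A A0" and v': "v' \<in> A2_of A A0"
    and u: "u \<in> touched v" "u \<in> touched v'" and ne: "touched v \<noteq> touched v'"
  shows "v \<inter> v' \<subseteq> u"
proof
  fix x assume x: "x \<in> v \<inter> v'"
  obtain a where a: "a \<in> touched v" "x \<in> a" using x A2_trace_card_and_cover(2)[OF v] by blast
  obtain b where b: "b \<in> touched v'" "x \<in> b" using x A2_trace_card_and_cover(2)[OF v'] by blast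
  have "a \<in> A0" "b \<in> A0" using a b unfolding touched_def by auto
  show "x \<in> u"
  proof (rule ccontr)
    assume "x \<notin> u"
    \<comment> \<open>Both pairs have two members, share \<open>u\<close> and differ, so \<open>a\<close> and \<open>b\<close> are their other members.\<close>
    moreover have "card (touched v) = 2" "card (touched v') = 2"
      using A2_memD v v' by auto
    ultimately have "a \<noteq> b" using a b u ne by (auto simp: card_2_iff)
    then show False using disjoint_A0[OF \<open>a \<in> A0\<close> \<open>b \<in> A0\<close>] a b by auto
  qed
qed

definition pairs :: "nat set set set" where
  "pairs = touched ` A2_of A A0"

definition fibre :: "nat set set \<Rightarrow> nat set set" where
  "fibre p = {v \<in> A2_of A A0. touched v = p}"

lemma pairs_subset: "pairs \<subseteq> {p. p \<subseteq> A0 \<and> card p = 2}"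
  unfolding pairs_def using A2_memD unfolding touched_def by auto

lemma finite_pairs: "finite pairs"
  unfolding pairs_def using finite_A2 by simp

lemma A2_eq_Union_fibres: "A2_of A A0 = (\<Union>p\<in>pairs. fibre p)"
  unfolding pairs_def fibre_def by auto

lemma card_fibre_le_traces:
  assumes "p = {u1, u2}"
  shows "card (fibre p) \<le> card ((\<lambda>v. u1 \<inter> v) ` fibre p) * card ((\<lambda>v. u2 \<inter> v) ` fibre p)"
proof -
  have "v = (u1 \<inter> v) \<union> (u2 \<inter> v)" if "v \<in> fibre p" for v
    using A2_trace_card_and_cover(2)[of v] that assms unfolding fibre_def by auto
  then have inj: "inj_on (\<lambda>v. (u1 \<inter> v, u2 \<inter> v)) (fibre p)"
    by (intro inj_onI) (metis prod.inject)
  have fin: "finite (fibre p)" using finite_A2 unfolding fibre_def by auto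
  have "card (fibre p) = card ((\<lambda>v. (u1 \<inter> v, u2 \<inter> v)) ` fibre p)" using card_image[OF inj] by simp
  also have "\<dots> \<le> card ((\<lambda>v. u1 \<inter> v) ` fibre p \<times> (\<lambda>v. u2 \<inter> v) ` fibre p)"
    by (rule card_mono) (use fin in auto)
  finally show ?thesis by (simp add: card_cartesian_product)
qed

lemma card_traces_le_6:
  assumes "u \<in> p" "p \<in> pairs"
  shows "card ((\<lambda>v. u \<inter> v) ` fibre p) \<le> 6"
proof -
  have "u \<in> A0" using assms pairs_subset by auto
  then have fu: "finite u" "card u = 4" using member_A subfamily by auto
  have "(\<lambda>v. u \<inter> v) ` fibre p \<subseteq> {X. X \<subseteq> u \<and> card X = 2}"
    using A2_trace_card_and_cover(1) assms unfolding fibre_def by auto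
  then have "card ((\<lambda>v. u \<inter> v) ` fibre p) \<le> card {X. X \<subseteq> u \<and> card X = 2}"
    using fu(1) by (intro card_mono) auto
  also have "\<dots> = 4 choose 2"
    using n_subsets[OF fu(1), of 2] fu(2) by simp
  also have "\<dots> = 6" by (simp add: choose_two)
  finally show ?thesis .
qed

lemma card_traces_le_2:
  assumes "u \<in> p" "p \<in> pairs" "u \<in> q" "q \<in> pairs" "q \<noteq> p"
  shows "card ((\<lambda>v. u \<inter> v) ` fibre p) \<le> 2"
proof -
  have "u \<in> A0" using assms pairs_subset by auto
  then have fu: "finite u" "card u = 4" using member_A subfamily by auto
  obtain v' where v': "v' \<in> A2_of A A0" "touched v' = q" using assms unfolding pairs_def by auto
  have c': "card (u \<inter> v') = 2" using A2_trace_card_and_cover(1)[OF v'(1)] v' assms by auto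
  have "(\<lambda>v. u \<inter> v) ` fibre p \<subseteq> {u \<inter> v', u - (u \<inter> v')}"
  proof
    fix X assume "X \<in> (\<lambda>v. u \<inter> v) ` fibre p"
    then obtain v where v: "v \<in> A2_of A A0" "touched v = p" "X = u \<inter> v"
      unfolding fibre_def by auto
    have "(u \<inter> v) \<inter> (u \<inter> v') = v \<inter> v'"
      using A2_Int_subset_common_member[OF v(1) v'(1)] v v' assms by auto
    then have "card ((u \<inter> v) \<inter> (u \<inter> v')) \<noteq> 1"
      using card_Int_neq_1 A2_memD v(1) v'(1) by metis
    moreover have "card (u \<inter> v) = 2" using A2_trace_card_and_cover(1)[OF v(1)] v assms by auto
    ultimately show "X \<in> {u \<inter> v', u - (u \<inter> v')}"
      using card2_subsets_eq_or_complement[OF fu, of "u \<inter> v" "u \<inter> v'"] c' v(3) by auto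
  qed
  moreover have "card {u \<inter> v', u - (u \<inter> v')} \<le> 2" by (simp add: card_insert_if)
  ultimately show ?thesis by (meson card_mono finite.emptyI finite.insertI order_trans)
qed

definition private_pairs :: "nat set set set" where
  "private_pairs = {p \<in> pairs. \<exists>u\<in>p. \<forall>q\<in>pairs. u \<in> q \<longrightarrow> q = p}"

lemma pairsE:
  assumes "p \<in> pairs"
  obtains u1 u2 where "p = {u1, u2}"
proof -
  have "card p = 2" using assms pairs_subset by auto
  then show ?thesis using that by (auto simp: card_2_iff)
qed

lemma card_fibre_le_36:
  assumes p: "p \<in> pairs"
  shows "card (fibre p) \<le> 36"
proof -
  obtain u1 u2 where u: "p = {u1, u2}" using pairsE[OF p] .
  have "card (fibre p) \<le> card ((\<lambda>v. u1 \<inter> v) ` fibre p) * card ((\<lambda>v. u2 \<inter> v) ` fibre p)"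
    by (rule card_fibre_le_traces[OF u])
  also have "\<dots> \<le> 6 * 6" by (intro mult_le_mono card_traces_le_6) (use p u in auto)
  finally show ?thesis by simp
qed

lemma card_fibre_le_4:
  assumes p: "p \<in> pairs - private_pairs"
  shows "card (fibre p) \<le> 4"
proof -
  obtain u1 u2 where u: "p = {u1, u2}" using pairsE[OF DiffD1[OF p]] .
  have "card ((\<lambda>v. u \<inter> v) ` fibre p) \<le> 2" if "u \<in> p" for u
    using p that card_traces_le_2[of u p] unfolding private_pairs_def by auto
  then have "card ((\<lambda>v. u1 \<inter> v) ` fibre p) * card ((\<lambda>v. u2 \<inter> v) ` fibre p) \<le> 2 * 2"
    using u by (intro mult_le_mono) auto
  then show ?thesis using card_fibre_le_traces[OF u] by simp
qed

lemma card_private_pairs_le: "card private_pairs \<le> card A0"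
proof -
  have "\<forall>p\<in>private_pairs. \<exists>u. u \<in> p \<and> (\<forall>q\<in>pairs. u \<in> q \<longrightarrow> q = p)"
    unfolding private_pairs_def by blast
  then obtain owner where owner:
    "\<forall>p\<in>private_pairs. owner p \<in> p \<and> (\<forall>q\<in>pairs. owner p \<in> q \<longrightarrow> q = p)"
    by (elim bchoice[THEN exE])
  have "inj_on owner private_pairs"
  proof (rule inj_onI)
    fix p p' assume p: "p \<in> private_pairs" and p': "p' \<in> private_pairs" and "owner p = owner p'"
    then have "owner p' \<in> p" using owner by metis
    moreover have "p \<in> pairs" using p unfolding private_pairs_def by simp
    ultimately show "p = p'" using owner p' by blast
  qed
  moreover have "owner ` private_pairs \<subseteq> A0"
  proof (rule image_subsetI)
    fix p assume p: "p \<in> private_pairs"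
    then have "p \<subseteq> A0" using pairs_subset unfolding private_pairs_def by auto
    then show "owner p \<in> A0" using owner p by blast
  qed
  ultimately show ?thesis by (rule card_inj_on_le[OF _ _ finite_A0])
qed

lemma card_A2_le: "card (A2_of A A0) \<le> 2 * card A0 ^ 2 + 36 * card A0"
proof -
  have sub: "private_pairs \<subseteq> pairs" unfolding private_pairs_def by auto
  have "card (pairs - private_pairs) \<le> card {p. p \<subseteq> A0 \<and> card p = 2}"
    using pairs_subset finite_A0 by (intro card_mono) auto
  then have few_pairs: "card (pairs - private_pairs) \<le> card A0 choose 2"
    using n_subsets[OF finite_A0] by simp
  have "card (A2_of A A0) \<le> (\<Sum>p\<in>pairs. card (fibre p))"
    unfolding A2_eq_Union_fibres using card_UN_le[OF finite_pairs] .
  also have "\<dots> = (\<Sum>p\<in>pairs - private_pairs. card (fibre p)) + (\<Sum>p\<in>private_pairs. card (fibre p))"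
    using finite_pairs sub by (simp add: sum.subset_diff)
  also have "\<dots> \<le> card (pairs - private_pairs) * 4 + card private_pairs * 36"
    using sub by (intro add_mono sum_bounded_above[where 'a=nat, simplified])
      (auto intro: card_fibre_le_4 card_fibre_le_36)
  also have "\<dots> \<le> 4 * (card A0 choose 2) + 36 * card A0"
    using few_pairs card_private_pairs_le by linarith
  also have "\<dots> \<le> 2 * card A0 ^ 2 + 36 * card A0"
    using four_choose_two_le by simp
  finally show ?thesis .
qed

lemma card_A0_le: "card A0 \<le> n"
proof -
  have "u \<noteq> {} \<and> u \<subseteq> {1..n}" if "u \<in> A0" for u
    using member_A[of u] subfamily that by (metis card.empty subsetD zero_neq_numeral)
  then have "card A0 \<le> card {1..n}" by (intro card_pairwise_disjoint_fam_le[OF _ disjoint]) auto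
  then show ?thesis by simp
qed

end

theorem lemma5:
  shows "\<forall>\<epsilon>::real>0. \<exists>N::nat. \<forall>n\<ge>N. \<forall>A A0.
           G_independent n A \<and> max_disjoint_subfamily A A0 \<longrightarrow>
           real (card (A2_of A A0)) \<le> 2 * real (card A0) ^ 2 + \<epsilon> * real n ^ 2"
proof (intro allI impI)
  fix \<epsilon> :: real assume "\<epsilon> > 0"
  show "\<exists>N::nat. \<forall>n\<ge>N. \<forall>A A0. G_independent n A \<and> max_disjoint_subfamily A A0 \<longrightarrow>
          real (card (A2_of A A0)) \<le> 2 * real (card A0) ^ 2 + \<epsilon> * real n ^ 2"
  proof (intro exI allI impI)
    fix n :: nat and A A0 assume n: "nat \<lceil>36 / \<epsilon>\<rceil> \<le> n"
      and "G_independent n A \<and> max_disjoint_subfamily A A0"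
    then interpret independent_with_disjoint_subfamily n A A0
      by unfold_locales (auto simp: max_disjoint_subfamily_def)
    have "36 / \<epsilon> \<le> real n" using n real_nat_ceiling_ge order_trans of_nat_mono by blast
    then have "36 \<le> \<epsilon> * real n" using \<open>\<epsilon> > 0\<close> by (simp add: pos_divide_le_eq mult.commute)
    then have "36 * real (card A0) \<le> \<epsilon> * real n * real n"
      using card_A0_le by (intro mult_mono) auto
    moreover have "real (card (A2_of A A0)) \<le> real (2 * card A0 ^ 2 + 36 * card A0)"
      using card_A2_le by (simp only: of_nat_le_iff)
    ultimately show "real (card (A2_of A A0)) \<le> 2 * real (card A0) ^ 2 + \<epsilon> * real n ^ 2"
      by (simp add: power2_eq_square)
  qed
qed

end
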